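(* Assume (i) $\eta^t=1/\sqrt t$ for all $t$; (ii) $\rho^t>0$ is nondecreasing and $\rho^t\le\rho^{\max}$ for all $t$; (iii) $f_p(\cdot)=f_p(\cdot;\mathcal{D}_p)$ is $L$-Lipschitz on $\mathcal{W}$ with respect to the Euclidean norm. Fix $t$ and $p$, let $w^{t+1},\lambda^t_p,z^t_p\in\mathbb{R}^{J\times K}$ and a noise realization $\tilde\xi^t_p\in\mathbb{R}^{J\times K}$ be given, let $$z^{t+1}_p=\operatorname{argmin}_{z\in\mathcal{W}}\langle f'_p(z^t_p),z\rangle+\tfrac{\rho^t}{2}\big\|w^{t+1}-z+\tfrac1{\rho^t}(\lambda^t_p-\tilde\xi^t_p)\big\|^2+\tfrac1{2\eta^t}\|z-z^t_p\|^2,$$ and $\lambda^{t+1}_p=\lambda^t_p+\rho^t(w^{t+1}-z^{t+1}_p)$. Then for all $z_p\in\mathcal{W}$, $$f_p(z^t_p)-f_p(z_p)-\langle\lambda^{t+1}_p,z^{t+1}_p-z_p\rangle\le\frac{\eta^t\|f'_p(z^t_p)+\tilde\xi^t_p\|^2}{2}+\frac1{2\eta^t}\big(\|z_p-z^t_p\|^2-\|z_p-z^{t+1}_p\|^2\big)+\langle\tilde\xi^t_p,z_p-z^t_p\rangle.$$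
   Context: $\mathbb{R}^{J\times K}$ carries the Frobenius inner product and norm. $\mathcal{W}\subset\mathbb{R}^{J\times K}$ is compact convex. $f_p(z)=\frac1I\sum_{i=1}^{I_p}\varphi(z;x_{pi},y_{pi})+\frac\beta Pr(z)$ is the local empirical risk of agent $p$ with convex loss $\varphi$ and convex regularizer $r$ on $\mathbb{R}^{J\times K}$, $\beta>0$; $f'_p(z)$ denotes a fixed subgradient of $f_p$ at $z$. *)

theory Defs
  imports "HOL-Analysis.Analysis"
begin

text \<open>Matrices in R^(J x K) are modelled as real^'k^'j; the inner product and norm
on this type are the Frobenius inner product and norm.\<close>

definition local_risk ::
  "nat \<Rightarrow> nat \<Rightarrow> nat \<Rightarrow> real \<Rightarrow> ('m \<Rightarrow> 'x \<Rightarrow> 'y \<Rightarrow> real) \<Rightarrow> ('m \<Rightarrow> real)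
    \<Rightarrow> (nat \<Rightarrow> 'x) \<Rightarrow> (nat \<Rightarrow> 'y) \<Rightarrow> 'm \<Rightarrow> real" where
  "local_risk I Ip P \<beta> \<phi> r xs ys z =
     (1 / real I) * (\<Sum>i=1..Ip. \<phi> z (xs i) (ys i)) + (\<beta> / real P) * r z"

definition is_subgradient :: "('a::real_inner \<Rightarrow> real) \<Rightarrow> 'a \<Rightarrow> 'a \<Rightarrow> bool" where
  "is_subgradient f z g \<longleftrightarrow> (\<forall>y. f z + inner g (y - z) \<le> f y)"

definition eta :: "nat \<Rightarrow> real" where
  "eta t = 1 / sqrt (real t)"

definition zobj :: "('m::real_inner) \<Rightarrow> real \<Rightarrow> real \<Rightarrow> 'm \<Rightarrow> 'm \<Rightarrow> 'm \<Rightarrow> 'm \<Rightarrow> 'm \<Rightarrow> real" where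
  "zobj g rho et w lam xi zt z =
     inner g z + rho / 2 * (norm (w - z + (1 / rho) *\<^sub>R (lam - xi)))\<^sup>2
       + 1 / (2 * et) * (norm (z - zt))\<^sup>2"

end

theory Submission
  imports Defs
begin

text \<open>The iterate z^{t+1} minimises a strongly convex quadratic over the convex set W, so it
satisfies the variational inequality <f'(z^t) + xi - lambda^{t+1} + (z^{t+1} - z^t)/eta, u - z^{t+1}> >= 0
for all u in W. Add the subgradient inequality at z^t, bound <f'(z^t) + xi, z^t - z^{t+1}> by Young's
inequality, and turn <z^{t+1} - z^t, u - z^{t+1}>/eta into a difference of squared distances by the
three-point identity; the two |z^t - z^{t+1}|^2 terms cancel.\<close>

lemma nonneg_if_linear_plus_quadratic_nonneg:
  fixes q c :: real
  assumes "\<And>s. 0 < s \<Longrightarrow> s \<le> 1 \<Longrightarrow> 0 \<le> s * q + s\<^sup>2 * c"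
  shows "0 \<le> q"
proof (rule tendsto_lowerbound)
  show "((\<lambda>s. q + s * c) \<longlongrightarrow> q) (at_right 0)"
    using tendsto_add[OF tendsto_const tendsto_mult_left_zero[OF tendsto_ident_at, of c]]
    by (simp add: mult.commute)
  have "0 \<le> q + s * c" if "0 < s" "s < 1" for s
  proof -
    have "0 \<le> s * (q + s * c)"
      using assms[of s] that by (simp add: algebra_simps power2_eq_square)
    then show ?thesis using \<open>0 < s\<close> by (simp add: zero_le_mult_iff)
  qed
  then show "\<forall>\<^sub>F s in at_right 0. 0 \<le> q + s * c"
    unfolding eventually_at_right_field by (intro exI[of _ 1]) auto
qed simp

lemma quadratic_expansion_along_line:
  fixes g u v x d :: "'a::real_inner" and a b s :: real
  defines "F \<equiv> \<lambda>y. inner g y + a / 2 * (norm (u - y))\<^sup>2 + b / 2 * (norm (y - v))\<^sup>2"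
  shows "F (x + s *\<^sub>R d) = F x + s * inner (g - a *\<^sub>R (u - x) + b *\<^sub>R (x - v)) d
           + s\<^sup>2 * ((a + b) / 2 * (norm d)\<^sup>2)"
  unfolding F_def power2_norm_eq_inner
  by (simp add: inner_simps inner_commute algebra_simps power2_eq_square)

lemma quadratic_argmin_variational_inequality:
  fixes g u v x z :: "'a::real_inner" and a b :: real
  defines "F \<equiv> \<lambda>y. inner g y + a / 2 * (norm (u - y))\<^sup>2 + b / 2 * (norm (y - v))\<^sup>2"
  assumes "convex W" and "x \<in> W" and "z \<in> W"
    and argmin: "\<And>y. y \<in> W \<Longrightarrow> F x \<le> F y"
  shows "0 \<le> inner (g - a *\<^sub>R (u - x) + b *\<^sub>R (x - v)) (z - x)"
proof (rule nonneg_if_linear_plus_quadratic_nonneg)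
  fix s :: real
  assume "0 < s" "s \<le> 1"
  have "x + s *\<^sub>R (z - x) = (1 - s) *\<^sub>R x + s *\<^sub>R z"
    by (simp add: algebra_simps)
  then have "x + s *\<^sub>R (z - x) \<in> W"
    using assms(2-4) \<open>0 < s\<close> \<open>s \<le> 1\<close> by (simp add: convex_def)
  then have "F x \<le> F (x + s *\<^sub>R (z - x))"
    by (rule argmin)
  then show "0 \<le> s * inner (g - a *\<^sub>R (u - x) + b *\<^sub>R (x - v)) (z - x)
                 + s\<^sup>2 * ((a + b) / 2 * (norm (z - x))\<^sup>2)"
    unfolding F_def quadratic_expansion_along_line[unfolded F_def] by simp
qed

lemma inner_le_Young:
  fixes x y :: "'a::real_inner"
  assumes "0 < e"
  shows "inner x y \<le> e / 2 * (norm x)\<^sup>2 + 1 / (2 * e) * (norm y)\<^sup>2"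
proof -
  have "0 \<le> (norm (e *\<^sub>R x - y))\<^sup>2"
    by simp
  also have "\<dots> = e\<^sup>2 * (norm x)\<^sup>2 - 2 * e * inner x y + (norm y)\<^sup>2"
    unfolding power2_norm_eq_inner
    by (simp add: inner_simps inner_commute power2_eq_square)
  finally show ?thesis
    using assms by (simp add: field_simps power2_eq_square)
qed

lemma linearized_prox_step_bound:
  fixes f :: "'a::real_inner \<Rightarrow> real"
  assumes subgrad: "is_subgradient f zt g"
    and "convex W" and "0 < \<rho>" and "0 < \<eta>"
    and zt1: "zt1 \<in> W"
    and argmin: "\<And>z. z \<in> W \<Longrightarrow> zobj g \<rho> \<eta> w lam xi zt zt1 \<le> zobj g \<rho> \<eta> w lam xi zt z"
    and zp: "zp \<in> W"
  shows "f zt - f zp - inner (lam + \<rho> *\<^sub>R (w - zt1)) (zt1 - zp)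
       \<le> \<eta> * (norm (g + xi))\<^sup>2 / 2
          + 1 / (2 * \<eta>) * ((norm (zp - zt))\<^sup>2 - (norm (zp - zt1))\<^sup>2)
          + inner xi (zp - zt)"
proof -
  define u where "u = w + (1 / \<rho>) *\<^sub>R (lam - xi)"
  define lam1 where "lam1 = lam + \<rho> *\<^sub>R (w - zt1)"
  have zobj_eq: "zobj g \<rho> \<eta> w lam xi zt z
      = inner g z + \<rho> / 2 * (norm (u - z))\<^sup>2 + (1 / \<eta>) / 2 * (norm (z - zt))\<^sup>2" for z
    unfolding zobj_def u_def by (simp add: algebra_simps)
  have "0 \<le> inner (g - \<rho> *\<^sub>R (u - zt1) + (1 / \<eta>) *\<^sub>R (zt1 - zt)) (zp - zt1)"
    using \<open>convex W\<close> zt1 zp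
    by (rule quadratic_argmin_variational_inequality) (use argmin in \<open>simp add: zobj_eq\<close>)
  also have "g - \<rho> *\<^sub>R (u - zt1) + (1 / \<eta>) *\<^sub>R (zt1 - zt) = g + xi - lam1 + (1 / \<eta>) *\<^sub>R (zt1 - zt)"
    unfolding u_def lam1_def using \<open>0 < \<rho>\<close> by (simp add: algebra_simps)
  finally have optimality:
    "inner lam1 (zp - zt1) \<le> inner (g + xi) (zp - zt1) + (1 / \<eta>) * inner (zt1 - zt) (zp - zt1)"
    unfolding inner_add_left inner_diff_left inner_scaleR_left by linarith
  have "f zt + inner g (zp - zt) \<le> f zp"
    using subgrad by (simp add: is_subgradient_def)
  then have subgradient_ineq: "f zt - f zp \<le> inner g (zt - zp)"
    by (simp add: inner_diff_right)
  have Young: "inner (g + xi) (zt - zt1) \<le> \<eta> / 2 * (norm (g + xi))\<^sup>2 + 1 / (2 * \<eta>) * (norm (zt - zt1))\<^sup>2"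
    using \<open>0 < \<eta>\<close> by (rule inner_le_Young)
  have three_point: "inner (zt1 - zt) (zp - zt1)
      = ((norm (zp - zt))\<^sup>2 - (norm (zt - zt1))\<^sup>2 - (norm (zp - zt1))\<^sup>2) / 2"
    using dot_norm[of "zt1 - zt" "zp - zt1"] by (simp add: norm_minus_commute[of zt1 zt])
  have scaled_three_point: "(1 / \<eta>) * inner (zt1 - zt) (zp - zt1)
      = 1 / (2 * \<eta>) * ((norm (zp - zt))\<^sup>2 - (norm (zp - zt1))\<^sup>2) - 1 / (2 * \<eta>) * (norm (zt - zt1))\<^sup>2"
    unfolding three_point using \<open>0 < \<eta>\<close> by (simp add: field_simps)
  have "inner g (zt - zp) - inner lam1 (zt1 - zp) = inner (g + xi) (zt - zt1)
      - (inner (g + xi) (zp - zt1) - inner lam1 (zp - zt1)) + inner xi (zp - zt)"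
    by (simp add: inner_add_left inner_diff_left inner_diff_right)
  then show ?thesis
    using subgradient_ineq optimality Young scaled_three_point unfolding lam1_def by linarith
qed

theorem proposition3:
  fixes W :: "(real^'k^'j) set"
    and \<phi> :: "real^'k^'j \<Rightarrow> 'x \<Rightarrow> 'y \<Rightarrow> real"
    and r :: "real^'k^'j \<Rightarrow> real"
    and xs :: "nat \<Rightarrow> 'x" and ys :: "nat \<Rightarrow> 'y"
    and I Ip P :: nat and \<beta> L \<rho>max :: real
    and \<rho> :: "nat \<Rightarrow> real"
    and fp' :: "real^'k^'j \<Rightarrow> real^'k^'j"
    and t :: nat
    and w1 lam lam1 zt zt1 xi :: "real^'k^'j"
  defines "f \<equiv> local_risk I Ip P \<beta> \<phi> r xs ys"
  assumes W: "compact W" "convex W"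
    and loss_convex: "\<And>x y. convex_on UNIV (\<lambda>z. \<phi> z x y)"
    and reg_convex: "convex_on UNIV r"
    and \<beta>: "\<beta> > 0" and I: "I > 0" and P: "P > 0"
    and subgrad: "\<And>z. is_subgradient f z (fp' z)"
    and t: "t \<ge> 1"
    and rho_pos: "\<And>s. \<rho> s > 0"
    and rho_mono: "mono \<rho>"
    and rho_max: "\<And>s. \<rho> s \<le> \<rho>max"
    and lip: "L-lipschitz_on W f"
    and zt1_mem: "zt1 \<in> W"
    and zt1_min: "\<And>z. z \<in> W \<Longrightarrow>
        zobj (fp' zt) (\<rho> t) (eta t) w1 lam xi zt zt1 \<le> zobj (fp' zt) (\<rho> t) (eta t) w1 lam xi zt z"
    and lam1: "lam1 = lam + \<rho> t *\<^sub>R (w1 - zt1)"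
  shows "\<forall>zp \<in> W.
     f zt - f zp - inner lam1 (zt1 - zp)
       \<le> eta t * (norm (fp' zt + xi))\<^sup>2 / 2
          + 1 / (2 * eta t) * ((norm (zp - zt))\<^sup>2 - (norm (zp - zt1))\<^sup>2)
          + inner xi (zp - zt)"
  \<comment> \<open>Only the subgradient property, convexity of \<open>W\<close>, \<open>\<rho> t > 0\<close> and \<open>eta t > 0\<close> enter this
     one-step bound.\<close>
proof -
  have "0 < eta t"
    using t by (simp add: eta_def)
  then show ?thesis
    using linearized_prox_step_bound[OF subgrad W(2) rho_pos _ zt1_mem zt1_min]
    unfolding lam1 by blast
qed

end
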